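(* Let $G=(V,E)$ be a $k$-uniform cored hypergraph ($k\ge3$) and let $\mathbf x\in\mathbb R^n$ be an H-eigenvector of its Laplacian tensor $\mathcal L$ corresponding to an H-eigenvalue $\lambda\ge1$. For each $e\in E$ let $i_e\in e$ be a cored vertex. Then $\prod_{s\in e}x_s\le0$ for all $e\in E$ when $k$ is even, and $\prod_{s\in e\setminus\{i_e\}}x_s\le0$ for all $e\in E$ when $k$ is odd.
   Context: A $k$-uniform hypergraph $G=(V,E)$ has $V=[n]$ and a nonempty set $E$ of $k$-element subsets of $V$; $d_i$ is the number of edges containing $i$. A cored vertex is a vertex of degree one; $G$ is cored if every edge contains a cored vertex. The Laplacian tensor $\mathcal L=\mathcal D-\mathcal A$ ($\mathcal D$ diagonal with entries $d_i$, $\mathcal A$ with entries $\frac1{(k-1)!}$ at index tuples forming an edge and $0$ otherwise) satisfies $(\mathcal L\mathbf x^{k-1})_i=d_ix_i^{k-1}-\sum_{e\in E,\,i\in e}\prod_{s\in e\setminus\{i\}}x_s$. A real $\lambda$ is an H-eigenvalue with H-eigenvector $\mathbf x\neq0$ if $(\mathcal L\mathbf x^{k-1})_i=\lambda x_i^{k-1}$ for all $i$. *)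

theory Defs
  imports Complex_Main
begin

definition uniform_hypergraph :: "nat \<Rightarrow> nat \<Rightarrow> nat set set \<Rightarrow> bool" where
  "uniform_hypergraph n k E \<longleftrightarrow> E \<noteq> {} \<and> (\<forall>e\<in>E. e \<subseteq> {1..n} \<and> card e = k)"

definition hdegree :: "nat set set \<Rightarrow> nat \<Rightarrow> nat" where
  "hdegree E i = card {e\<in>E. i \<in> e}"

definition cored_vertex :: "nat set set \<Rightarrow> nat \<Rightarrow> bool" where
  "cored_vertex E i \<longleftrightarrow> hdegree E i = 1"

definition cored :: "nat set set \<Rightarrow> bool" where
  "cored E \<longleftrightarrow> (\<forall>e\<in>E. \<exists>i\<in>e. cored_vertex E i)"

text \<open>(L x^{k-1})_i = d_i x_i^{k-1} - sum over edges e containing i of prod_{s in e - {i}} x_s\<close>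
definition laplacian_apply :: "nat set set \<Rightarrow> nat \<Rightarrow> (nat \<Rightarrow> real) \<Rightarrow> nat \<Rightarrow> real" where
  "laplacian_apply E k x i =
     real (hdegree E i) * x i ^ (k - 1) - (\<Sum>e\<in>{e\<in>E. i \<in> e}. \<Prod>s\<in>e - {i}. x s)"

definition H_eigenpair :: "nat \<Rightarrow> nat \<Rightarrow> nat set set \<Rightarrow> real \<Rightarrow> (nat \<Rightarrow> real) \<Rightarrow> bool" where
  "H_eigenpair n k E lam x \<longleftrightarrow>
     (\<forall>i. i \<notin> {1..n} \<longrightarrow> x i = 0) \<and> (\<exists>i\<in>{1..n}. x i \<noteq> 0) \<and>
     (\<forall>i\<in>{1..n}. laplacian_apply E k x i = lam * x i ^ (k - 1))"

end

theory Submission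
  imports Defs
begin

text \<open>At a cored vertex i of an edge e the eigen-equation has a single summand and reads
  prod_{s in e - {i}} x_s = (1 - lam) x_i^(k-1). For lam >= 1 the right-hand side is nonpositive
  when k - 1 is even; when k is even, multiplying by x_i gives prod_{s in e} x_s = (1 - lam) x_i^k <= 0.\<close>

lemma edges_containing_cored_vertex:
  assumes "e \<in> E" "i \<in> e" "cored_vertex E i"
  shows "{e'\<in>E. i \<in> e'} = {e}"
proof -
  have "card {e'\<in>E. i \<in> e'} = 1"
    using assms(3) by (simp add: cored_vertex_def hdegree_def)
  then obtain a where "{e'\<in>E. i \<in> e'} = {a}"
    by (rule card_1_singletonE)
  moreover have "e \<in> {e'\<in>E. i \<in> e'}"
    using assms(1,2) by simp
  ultimately show ?thesis
    by auto
qed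

lemma laplacian_apply_cored_vertex:
  assumes "e \<in> E" "i \<in> e" "cored_vertex E i"
  shows "laplacian_apply E k x i = x i ^ (k - 1) - (\<Prod>s\<in>e - {i}. x s)"
  using edges_containing_cored_vertex[OF assms] assms(3)
  by (simp add: laplacian_apply_def cored_vertex_def)

lemma H_eigenpair_prod_cored_edge:
  assumes "H_eigenpair n k E lam x" "uniform_hypergraph n k E"
    and "e \<in> E" "i \<in> e" "cored_vertex E i"
  shows "(\<Prod>s\<in>e - {i}. x s) = (1 - lam) * x i ^ (k - 1)"
proof -
  have "i \<in> {1..n}"
    using assms(2-4) unfolding uniform_hypergraph_def by blast
  then have "laplacian_apply E k x i = lam * x i ^ (k - 1)"
    using assms(1) by (simp add: H_eigenpair_def)
  then show ?thesis
    using laplacian_apply_cored_vertex[OF assms(3-5)] by (simp add: algebra_simps)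
qed

lemma one_minus_mult_even_power_nonpos:
  fixes lam t :: real
  assumes "lam \<ge> 1" "even m"
  shows "(1 - lam) * t ^ m \<le> 0"
  using assms by (simp add: mult_nonpos_nonneg zero_le_even_power)

theorem lemma3p3:
  fixes n k :: nat and E :: "nat set set" and x :: "nat \<Rightarrow> real" and lam :: real
    and ic :: "nat set \<Rightarrow> nat"
  assumes "uniform_hypergraph n k E" and "k \<ge> 3" and "cored E"
    and "H_eigenpair n k E lam x" and "lam \<ge> 1"
    and "\<forall>e\<in>E. ic e \<in> e \<and> cored_vertex E (ic e)"
  shows "(even k \<longrightarrow> (\<forall>e\<in>E. (\<Prod>s\<in>e. x s) \<le> 0)) \<and>
         (odd k \<longrightarrow> (\<forall>e\<in>E. (\<Prod>s\<in>e - {ic e}. x s) \<le> 0))"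
proof (intro conjI impI ballI)
  fix e assume "e \<in> E"
  then have i: "ic e \<in> e" "cored_vertex E (ic e)" and "card e = k"
    using assms(1,6) by (auto simp: uniform_hypergraph_def)
  then have "finite e"
    using assms(2) card.infinite by fastforce
  have rest: "(\<Prod>s\<in>e - {ic e}. x s) = (1 - lam) * x (ic e) ^ (k - 1)"
    using H_eigenpair_prod_cored_edge[OF assms(4,1) \<open>e \<in> E\<close> i] .
  {
    assume "even k"
    have "(\<Prod>s\<in>e. x s) = x (ic e) * (\<Prod>s\<in>e - {ic e}. x s)"
      using \<open>finite e\<close> i(1) by (simp add: prod.remove)
    also have "\<dots> = (1 - lam) * x (ic e) ^ Suc (k - 1)"
      by (simp add: rest)
    finally show "(\<Prod>s\<in>e. x s) \<le> 0"
      using assms(2,5) \<open>even k\<close> one_minus_mult_even_power_nonpos[of lam k] by simp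
  next
    assume "odd k"
    then show "(\<Prod>s\<in>e - {ic e}. x s) \<le> 0"
      using assms(2,5) rest one_minus_mult_even_power_nonpos[of lam "k - 1"] by simp
  }
qed

end
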